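(* Let $P=\{(x,y,z)\in\mathbb{R}^3: z=\tfrac12xy\}$. Then $(P,d_{\mathbb{H}})$ bi-Lipschitz embeds in $\mathbb{R}^{19}$.
   Context: For $p=(x,y,z)$, $q=(x',y',z')$, $d_{\mathbb{H}}(p,q)=|x-x'|+|y-y'|+|z-z'+\tfrac12(xy'-x'y)|^{1/2}$. $(A,d_{\mathbb{H}})$ bi-Lipschitz embeds in $\mathbb{R}^{N}$ if there are $L\ge1$ and $f:A\to\mathbb{R}^N$ with $L^{-1}d_{\mathbb{H}}(a,b)\le|f(a)-f(b)|\le Ld_{\mathbb{H}}(a,b)$ for all $a,b\in A$. *)

theory Defs
  imports "HOL-Analysis.Analysis" "HOL-Library.Numeral_Type"
begin

definition heis_dist :: "real \<times> real \<times> real \<Rightarrow> real \<times> real \<times> real \<Rightarrow> real" where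
  "heis_dist p q = (case p of (x, y, z) \<Rightarrow> case q of (x', y', z') \<Rightarrow>
      \<bar>x - x'\<bar> + \<bar>y - y'\<bar> + sqrt \<bar>z - z' + (1/2) * (x * y' - x' * y)\<bar>)"

definition bilip_embeds :: "('a \<Rightarrow> 'a \<Rightarrow> real) \<Rightarrow> 'a set \<Rightarrow> 'b::real_normed_vector itself \<Rightarrow> bool" where
  "bilip_embeds d A T \<longleftrightarrow> (\<exists>L::real. \<exists>f::'a \<Rightarrow> 'b. L \<ge> 1 \<and>
      (\<forall>a\<in>A. \<forall>b\<in>A. d a b / L \<le> norm (f a - f b) \<and> norm (f a - f b) \<le> L * d a b))"

definition heis_plane :: "(real \<times> real \<times> real) set" where
  "heis_plane = {(x, y, z). z = (1/2) * x * y}"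

end

theory Submission
  imports Defs
begin

(* On the plane z = xy/2 the Heisenberg distance equals |x - x'| + |y - y'| + sqrt (|x - x'| |y + y'| / 2),
   so besides x and y the embedding has to detect sqrt (|x - x'| |y|).  It does so with eight lacunary
   series G_r (x, y) = sum over k = r (mod 8) of a_k (|y|) e^(i 2^k x), whose amplitudes
   a_k (u) = min (sqrt (2^k u), (2^k u)^2) / 2^k decay like 2^(-|k - m| / 2) away from the dyadic
   scale 2^(-m) of u.  Summing these geometric tails shows that each G_r is Lipschitz in y and
   1/2-Hoelder in x with constant sqrt |y|.  Conversely, if 2^k |x - x'| lies in [1, 2) and
   |x - x'| <= |y|, the k-th term of G_(k mod 8) moves by at least (3/4) sqrt (|y| / 2^k), while the
   other terms of its block are at least 8 scales away and move by at most (4/15) sqrt (|y| / 2^k).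
   The image lies in C^8 x R^2, of real dimension 18, which embeds isometrically into R^19. *)

section \<open>Geometric series over the integers\<close>

lemma has_sum_power_abs_diff_int_punctured:
  fixes q :: real and m :: int
  assumes "0 \<le> q" "q < 1"
  shows "((\<lambda>k. q ^ nat \<bar>k - m\<bar>) has_sum (2 * q / (1 - q))) (- {m})"
proof -
  have geometric: "((\<lambda>n. q * q ^ n) has_sum (q / (1 - q))) UNIV"
    using has_sum_cmult_right[OF sums_nonneg_imp_has_sum[OF geometric_sums], of q q] assms by simp
  have up: "bij_betw (\<lambda>n. m + 1 + int n) UNIV {m<..}"
    by (rule bij_betw_byWitness[where f'="\<lambda>k. nat (k - m - 1)"]) auto
  have down: "bij_betw (\<lambda>n. m - 1 - int n) UNIV {..<m}"
    by (rule bij_betw_byWitness[where f'="\<lambda>k. nat (m - 1 - k)"]) auto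
  have "nat \<bar>(m + 1 + int n) - m\<bar> = Suc n" "nat \<bar>(m - 1 - int n) - m\<bar> = Suc n" for n
    by simp_all
  then have "((\<lambda>k. q ^ nat \<bar>k - m\<bar>) has_sum (q / (1 - q))) {m<..}"
    and "((\<lambda>k. q ^ nat \<bar>k - m\<bar>) has_sum (q / (1 - q))) {..<m}"
    using has_sum_reindex_bij_betw[OF up, of "\<lambda>k. q ^ nat \<bar>k - m\<bar>"]
      has_sum_reindex_bij_betw[OF down, of "\<lambda>k. q ^ nat \<bar>k - m\<bar>"] geometric
    by simp_all
  then have "((\<lambda>k. q ^ nat \<bar>k - m\<bar>) has_sum (q / (1 - q) + q / (1 - q))) ({m<..} \<union> {..<m})"
    by (intro has_sum_Un_disjoint) auto
  moreover have "{m<..} \<union> {..<m} = - {m}" by auto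
  ultimately show ?thesis by simp
qed

lemma has_sum_power_abs_diff_int:
  fixes q :: real and m :: int
  assumes "0 \<le> q" "q < 1"
  shows "((\<lambda>k. q ^ nat \<bar>k - m\<bar>) has_sum ((1 + q) / (1 - q))) UNIV"
proof -
  have "((\<lambda>k. q ^ nat \<bar>k - m\<bar>) has_sum (1 + 2 * q / (1 - q))) (insert m (- {m}))"
    using has_sum_insert[OF _ has_sum_power_abs_diff_int_punctured[OF assms]] by simp
  moreover have "1 + 2 * q / (1 - q) = (1 + q) / (1 - q)"
    using assms by (simp add: field_simps)
  moreover have "insert m (- {m}) = UNIV"
    by auto
  ultimately show ?thesis
    by simp
qed

lemma
  fixes f :: "'a \<Rightarrow> 'b::real_normed_vector" and g :: "'a \<Rightarrow> real"
  assumes "(g has_sum S) A" "B \<subseteq> A" "\<And>k. k \<in> A \<Longrightarrow> 0 \<le> g k"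
    and "\<And>k. k \<in> B \<Longrightarrow> norm (f k) \<le> g k"
  shows norm_summable_on_majorant: "(\<lambda>k. norm (f k)) summable_on B"
    and infsum_norm_le_majorant: "infsum (\<lambda>k. norm (f k)) B \<le> S"
proof -
  have "g summable_on A"
    using assms(1) by (auto simp: summable_on_def)
  then have "g summable_on B"
    using assms(2) by (rule summable_on_subset_banach)
  then show norm_summable: "(\<lambda>k. norm (f k)) summable_on B"
    by (rule summable_on_comparison_test) (use assms in auto)
  have "infsum (\<lambda>k. norm (f k)) B \<le> infsum g B"
    by (rule infsum_mono[OF norm_summable \<open>g summable_on B\<close>]) (use assms in auto)
  also have "\<dots> \<le> infsum g A"
    using assms \<open>g summable_on B\<close> by (intro infsum_mono_neutral) (auto simp: summable_on_def)
  also have "\<dots> = S"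
    using assms(1) by (rule infsumI)
  finally show "infsum (\<lambda>k. norm (f k)) B \<le> S" .
qed

lemma infsum_diff:
  fixes f g :: "'a \<Rightarrow> 'b::{topological_ab_group_add, t2_space}"
  assumes "f summable_on A" "g summable_on A"
  shows "infsum (\<lambda>x. f x - g x) A = infsum f A - infsum g A"
  using infsum_add[OF assms(1), of "\<lambda>x. - g x"] assms(2)
  by (simp add: summable_on_uminus infsum_uminus)

section \<open>Dyadic scales\<close>

lemma dyadic_scale_exists:
  fixes v :: real
  assumes "0 < v"
  obtains m :: int where "1 \<le> 2 powr m * v" "2 powr m * v < 2"
proof -
  define m where "m = \<lceil>log 2 (1 / v)\<rceil>"
  have "2 powr (log 2 (1 / v)) = 1 / v"
    using assms by simp
  moreover have "2 powr (log 2 (1 / v)) \<le> 2 powr m"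
    unfolding m_def by (intro powr_mono) auto
  moreover have "2 powr (m - 1) < 2 powr (log 2 (1 / v))"
    unfolding m_def by (intro powr_less_mono) linarith+
  ultimately have "1 / v \<le> 2 powr m" "2 powr (m - 1) < 1 / v"
    by auto
  then have "1 \<le> 2 powr m * v" "2 powr m * v < 2"
    using assms by (auto simp: powr_diff divide_simps)
  then show thesis
    by (rule that)
qed

lemma two_powr_int_split:
  fixes k m :: int
  assumes "m \<le> k"
  shows "(2::real) powr k = 2 powr m * 2 ^ nat (k - m)"
proof -
  have "(2::real) powr k = 2 powr (m + real (nat (k - m)))"
    using assms by simp
  also have "\<dots> = 2 powr m * 2 powr real (nat (k - m))"
    by (rule powr_add)
  also have "2 powr real (nat (k - m)) = (2::real) ^ nat (k - m)"
    by (rule powr_realpow) simp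
  finally show ?thesis .
qed

definition \<rho> :: real where "\<rho> = sqrt (1 / 2)"

lemma rho_nonneg: "0 \<le> \<rho>"
  and rho_less_one: "\<rho> < 1"
  and rho_power2: "\<rho>\<^sup>2 = 1 / 2"
  by (auto simp: \<rho>_def)

lemma half_power_le_rho_power: "(1 / 2) ^ n \<le> \<rho> ^ n"
proof (rule power_mono)
  show "1 / 2 \<le> \<rho>"
    unfolding \<rho>_def by (rule real_le_rsqrt) (simp add: power2_eq_square)
qed simp

lemma sqrt_divide_two_power: "sqrt (u / 2 ^ n) = sqrt u * \<rho> ^ n"
  by (simp add: \<rho>_def real_sqrt_divide real_sqrt_power power_divide)

lemma rho_power_eq: "\<rho> ^ n = 1 / sqrt (2 ^ n)"
  using sqrt_divide_two_power[of 1 n] by (simp add: real_sqrt_divide)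

lemma rho_power_mult_8: "\<rho> ^ (8 * n) = (1 / 16) ^ n"
proof -
  have "\<rho> ^ (8 * n) = (\<rho>\<^sup>2) ^ (4 * n)"
    by (simp flip: power_mult)
  then show ?thesis
    by (simp add: rho_power2 power_mult power_one_over)
qed

lemma rho_geometric_total_le: "(1 + \<rho>) / (1 - \<rho>) \<le> 6"
proof -
  have "\<rho> \<le> 5 / 7"
    unfolding \<rho>_def by (rule real_le_lsqrt) (auto simp: power2_eq_square)
  then show ?thesis
    using rho_less_one by (simp add: field_simps)
qed

lemma
  fixes f :: "int \<Rightarrow> 'a::real_normed_vector"
  assumes "0 \<le> C" "\<And>k. k \<in> B \<Longrightarrow> norm (f k) \<le> C * \<rho> ^ nat \<bar>k - m\<bar>"
  shows rho_decay_norm_summable: "(\<lambda>k. norm (f k)) summable_on B"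
    and rho_decay_infsum_norm_le: "infsum (\<lambda>k. norm (f k)) B \<le> 6 * C"
proof -
  have majorant: "((\<lambda>k. C * \<rho> ^ nat \<bar>k - m\<bar>) has_sum (C * ((1 + \<rho>) / (1 - \<rho>)))) UNIV"
    by (rule has_sum_cmult_right[OF has_sum_power_abs_diff_int[OF rho_nonneg rho_less_one]])
  show "(\<lambda>k. norm (f k)) summable_on B"
    by (rule norm_summable_on_majorant[OF majorant]) (use assms rho_nonneg in auto)
  have "infsum (\<lambda>k. norm (f k)) B \<le> C * ((1 + \<rho>) / (1 - \<rho>))"
    by (rule infsum_norm_le_majorant[OF majorant]) (use assms rho_nonneg in auto)
  also have "\<dots> \<le> C * 6"
    by (rule mult_left_mono[OF rho_geometric_total_le assms(1)])
  finally show "infsum (\<lambda>k. norm (f k)) B \<le> 6 * C"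
    by simp
qed

lemma sqrt_diff_le_divide:
  fixes a b :: real
  assumes "0 \<le> b" "b \<le> a" "0 < a"
  shows "sqrt a - sqrt b \<le> (a - b) / sqrt a"
proof -
  have "(sqrt a - sqrt b) * sqrt a \<le> (sqrt a - sqrt b) * (sqrt a + sqrt b)"
    using assms by (intro mult_left_mono) auto
  also have "\<dots> = a - b"
    using assms by (simp add: algebra_simps)
  finally show ?thesis
    using assms by (simp add: field_simps)
qed

lemma sqrt_mult_divide: "0 < e \<Longrightarrow> sqrt (e * u) / e = sqrt (u / e)"
  by (simp add: real_sqrt_mult real_sqrt_divide field_simps)

lemma sqrt_mult_le_shift:
  fixes h a b \<delta> :: real
  assumes "0 \<le> h" "0 \<le> b" "0 \<le> \<delta>" "a \<le> b + \<delta> / 2"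
  shows "sqrt (h * a) \<le> sqrt (h * b) + h + \<delta>"
proof -
  have "sqrt (h * a) \<le> sqrt (h * b + h * \<delta> / 2)"
    using mult_left_mono[OF assms(4,1)] by (intro real_sqrt_le_mono) (simp add: algebra_simps)
  also have "\<dots> \<le> sqrt (h * b) + sqrt (h * \<delta> / 2)"
    by (rule sqrt_add_le_add_sqrt) (use assms in auto)
  also have "sqrt (h * \<delta> / 2) \<le> h + \<delta>"
    using assms by (intro real_le_lsqrt) (auto simp: power2_eq_square algebra_simps)
  finally show ?thesis
    by simp
qed

section \<open>Profile and amplitudes\<close>

definition profile :: "real \<Rightarrow> real" where
  "profile t = min (sqrt t) (t\<^sup>2)"

lemma profile_eq_square:
  assumes "0 \<le> t" "t \<le> 1"
  shows "profile t = t\<^sup>2"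
proof -
  have "t\<^sup>2 \<le> t"
    using assms mult_left_le[of t t] by (simp add: power2_eq_square)
  also have "t \<le> sqrt t"
    using \<open>t\<^sup>2 \<le> t\<close> by (rule real_le_rsqrt)
  finally show ?thesis
    by (simp add: profile_def)
qed

lemma profile_eq_sqrt:
  assumes "1 \<le> t"
  shows "profile t = sqrt t"
proof -
  have "t \<le> t\<^sup>2"
    using assms mult_left_mono[of 1 t t] by (simp add: power2_eq_square)
  then have "sqrt t \<le> t"
    using assms by (intro real_le_lsqrt) auto
  with \<open>t \<le> t\<^sup>2\<close> show ?thesis
    by (simp add: profile_def)
qed

lemma profile_nonneg: "0 \<le> t \<Longrightarrow> 0 \<le> profile t"
  by (simp add: profile_def)

lemma profile_mono: "0 \<le> s \<Longrightarrow> s \<le> t \<Longrightarrow> profile s \<le> profile t"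
  unfolding profile_def by (intro min.mono real_sqrt_le_mono power_mono) auto

lemma profile_diff_le:
  assumes "0 \<le> s" "s \<le> t"
  shows "profile t - profile s \<le> 2 * (t - s)"
proof -
  have square_regime: "profile b - profile a \<le> 2 * (b - a)" if "0 \<le> a" "a \<le> b" "b \<le> 1" for a b
  proof -
    have "profile b - profile a = (b + a) * (b - a)"
      using that by (simp add: profile_eq_square power2_eq_square algebra_simps)
    also have "\<dots> \<le> 2 * (b - a)"
      using that by (intro mult_right_mono) auto
    finally show ?thesis .
  qed
  have sqrt_regime: "profile b - profile a \<le> 2 * (b - a)" if "1 \<le> a" "a \<le> b" for a b
  proof -
    have "profile b - profile a \<le> (b - a) / sqrt b"
      using that by (simp add: profile_eq_sqrt sqrt_diff_le_divide)
    also have "\<dots> \<le> (b - a) / 1"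
      using that by (intro divide_left_mono) auto
    finally show ?thesis
      using that by simp
  qed
  consider "t \<le> 1" | "1 \<le> s" | "s < 1" "1 < t"
    by linarith
  then show ?thesis
  proof cases
    case 3
    then show ?thesis
      using square_regime[of s 1] sqrt_regime[of 1 t] assms by simp
  qed (use assms square_regime sqrt_regime in auto)
qed

definition amplitude :: "int \<Rightarrow> real \<Rightarrow> real" where
  "amplitude k u = profile (2 powr k * u) / 2 powr k"

lemma amplitude_nonneg: "0 \<le> u \<Longrightarrow> 0 \<le> amplitude k u"
  by (simp add: amplitude_def profile_nonneg)

lemma amplitude_mono: "0 \<le> u \<Longrightarrow> u \<le> u' \<Longrightarrow> amplitude k u \<le> amplitude k u'"
  unfolding amplitude_def by (intro divide_right_mono profile_mono) auto

lemma amplitude_le_sqrt: "amplitude k u \<le> sqrt (u / 2 powr k)"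
proof -
  have "amplitude k u \<le> sqrt (2 powr k * u) / 2 powr k"
    unfolding amplitude_def profile_def by (intro divide_right_mono) auto
  then show ?thesis
    by (simp add: sqrt_mult_divide)
qed

lemma amplitude_le_square: "amplitude k u \<le> 2 powr k * u\<^sup>2"
proof -
  have "amplitude k u \<le> (2 powr k * u)\<^sup>2 / 2 powr k"
    unfolding amplitude_def profile_def by (intro divide_right_mono) auto
  then show ?thesis
    by (simp add: power2_eq_square mult_ac)
qed

lemma amplitude_eq_sqrt: "1 \<le> 2 powr k * u \<Longrightarrow> amplitude k u = sqrt (2 powr k * u) / 2 powr k"
  by (simp add: amplitude_def profile_eq_sqrt)

lemma amplitude_eq_square: "0 \<le> u \<Longrightarrow> 2 powr k * u \<le> 1 \<Longrightarrow> amplitude k u = 2 powr k * u\<^sup>2"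
  by (simp add: amplitude_def profile_eq_square power2_eq_square)

lemma amplitude_diff_le:
  assumes "0 \<le> u" "u \<le> u'"
  shows "amplitude k u' - amplitude k u \<le> 2 * (u' - u)"
proof -
  have "amplitude k u' - amplitude k u = (profile (2 powr k * u') - profile (2 powr k * u)) / 2 powr k"
    by (simp add: amplitude_def diff_divide_distrib)
  also have "\<dots> \<le> 2 * (2 powr k * u' - 2 powr k * u) / 2 powr k"
    using assms by (intro divide_right_mono profile_diff_le) auto
  also have "\<dots> = 2 * (u' - u)"
    by (simp add: field_simps)
  finally show ?thesis .
qed

lemma amplitude_decay:
  assumes "0 < u" and scale: "1 \<le> 2 powr m * u" "2 powr m * u < 2"
  shows "amplitude k u \<le> 2 * u * \<rho> ^ nat \<bar>k - m\<bar>"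
proof (cases "m \<le> k")
  case True
  define n where "n = nat (k - m)"
  have "amplitude k u \<le> sqrt ((u / 2 powr m) / 2 ^ n)"
    using amplitude_le_sqrt[of k u] by (simp add: two_powr_int_split[OF True] n_def)
  also have "\<dots> = sqrt (u / 2 powr m) * \<rho> ^ n"
    by (rule sqrt_divide_two_power)
  also have "\<dots> \<le> u * \<rho> ^ n"
  proof (intro mult_right_mono real_le_lsqrt)
    show "u / 2 powr m \<le> u\<^sup>2"
      using assms by (simp add: field_simps power2_eq_square)
  qed (use assms rho_nonneg in auto)
  also have "\<dots> \<le> 2 * u * \<rho> ^ n"
    using assms rho_nonneg by simp
  finally show ?thesis
    using True by (simp add: n_def)
next
  case False
  define n where "n = nat (m - k)"
  have "amplitude k u \<le> 2 powr k * u\<^sup>2"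
    by (rule amplitude_le_square)
  also have "\<dots> = (2 powr m * u) * u * (1 / 2) ^ n"
    using False by (simp add: two_powr_int_split[of k m] n_def power2_eq_square power_one_over field_simps)
  also have "\<dots> \<le> 2 * u * \<rho> ^ n"
    using assms half_power_le_rho_power[of n] by (intro mult_mono) auto
  finally show ?thesis
    using False by (simp add: n_def)
qed

lemma amplitude_diff_above_scale:
  assumes "0 \<le> u" "u \<le> u'" "u' \<le> 2 * u" "1 \<le> 2 powr m * u'" "m < k"
  shows "amplitude k u' - amplitude k u \<le> (u' - u) * \<rho> ^ nat (k - m)"
proof -
  define e where "e = (2::real) powr k"
  define n where "n = nat (k - m)"
  have "e > 0"
    by (simp add: e_def)
  have "(2::real) ^ n * 1 \<le> 2 ^ n * (2 powr m * u')"
    using assms(4) by (intro mult_left_mono) auto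
  then have large: "2 ^ n \<le> e * u'"
    using assms(5) by (simp add: e_def n_def two_powr_int_split[of m k] mult_ac)
  moreover have "(2::real) \<le> 2 ^ n"
    using assms(5) power_increasing[of 1 n "2::real"] by (simp add: n_def)
  moreover have "e * u' \<le> 2 * (e * u)"
    using mult_left_mono[OF assms(3), of e] \<open>e > 0\<close> by simp
  ultimately have "1 \<le> e * u"
    by linarith
  then have "amplitude k u' - amplitude k u = (sqrt (e * u') - sqrt (e * u)) / e"
    using amplitude_eq_sqrt[of k u] amplitude_eq_sqrt[of k u'] large \<open>2 \<le> 2 ^ n\<close>
    by (simp add: e_def diff_divide_distrib)
  also have "\<dots> \<le> ((e * u' - e * u) / sqrt (e * u')) / e"
    using assms \<open>e > 0\<close> \<open>1 \<le> e * u\<close> \<open>2 \<le> 2 ^ n\<close> large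
    by (intro divide_right_mono sqrt_diff_le_divide mult_left_mono) auto
  also have "\<dots> = (u' - u) / sqrt (e * u')"
    using \<open>e > 0\<close> by (simp flip: right_diff_distrib)
  also have "\<dots> \<le> (u' - u) / sqrt (2 ^ n)"
  proof (intro divide_left_mono real_sqrt_le_mono)
    show "0 < sqrt (e * u') * sqrt (2 ^ n)"
      using large by (smt (verit) real_sqrt_gt_zero mult_pos_pos zero_less_power)
  qed (use assms large in auto)
  also have "\<dots> = (u' - u) * \<rho> ^ n"
    by (simp add: rho_power_eq)
  finally show ?thesis
    by (simp add: n_def)
qed

lemma amplitude_diff_below_scale:
  assumes "0 \<le> u" "u \<le> u'" "2 powr m * u' < 2" "k < m"
  shows "amplitude k u' - amplitude k u \<le> 4 * (u' - u) * \<rho> ^ nat (m - k)"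
proof -
  define e where "e = (2::real) powr k"
  define n where "n = nat (m - k)"
  have "e > 0"
    by (simp add: e_def)
  have small: "e * u' * 2 ^ n < 2"
    using assms(3,4) by (simp add: e_def n_def two_powr_int_split[of k m] mult_ac)
  moreover have "e * u' * 2 \<le> e * u' * 2 ^ n"
    using assms(1,2,4) \<open>e > 0\<close> power_increasing[of 1 n "2::real"] by (intro mult_left_mono) (auto simp: n_def)
  ultimately have "e * u' \<le> 1"
    by linarith
  moreover have "e * u \<le> 1"
    using \<open>e * u' \<le> 1\<close> mult_left_mono[OF assms(2), of e] \<open>e > 0\<close> by linarith
  ultimately have "amplitude k u' - amplitude k u = e * (u' + u) * (u' - u)"
    using assms amplitude_eq_square[of u k] amplitude_eq_square[of u' k]
    by (simp add: e_def power2_eq_square algebra_simps)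
  also have "\<dots> \<le> 2 * (e * u') * (u' - u)"
    using assms \<open>e > 0\<close> by (intro mult_right_mono) auto
  also have "\<dots> = 2 * (e * u' * 2 ^ n) * (u' - u) * (1 / 2) ^ n"
    by (simp add: power_one_over)
  also have "\<dots> \<le> 4 * (u' - u) * \<rho> ^ n"
    using assms small half_power_le_rho_power[of n] by (intro mult_mono) auto
  finally show ?thesis
    by (simp add: n_def)
qed

lemma amplitude_diff_decay:
  assumes "0 \<le> u" "u \<le> u'" and scale: "1 \<le> 2 powr m * u'" "2 powr m * u' < 2"
  shows "\<bar>amplitude k u' - amplitude k u\<bar> \<le> 4 * (u' - u) * \<rho> ^ nat \<bar>k - m\<bar>"
proof -
  have "0 < 2 powr m * u'"
    using scale(1) by linarith
  then have "0 < u'"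
    by (simp add: zero_less_mult_iff)
  consider "2 * u < u'" | "u' \<le> 2 * u" "m < k" | "k = m" | "k < m"
    by linarith
  then have "amplitude k u' - amplitude k u \<le> 4 * (u' - u) * \<rho> ^ nat \<bar>k - m\<bar>"
  proof cases
    case 1
    have "amplitude k u' - amplitude k u \<le> amplitude k u'"
      using assms amplitude_nonneg by simp
    also have "\<dots> \<le> 2 * u' * \<rho> ^ nat \<bar>k - m\<bar>"
      using \<open>0 < u'\<close> scale by (rule amplitude_decay)
    also have "\<dots> \<le> 4 * (u' - u) * \<rho> ^ nat \<bar>k - m\<bar>"
      using 1 rho_nonneg by (intro mult_right_mono) auto
    finally show ?thesis .
  next
    case 2
    then have "amplitude k u' - amplitude k u \<le> (u' - u) * \<rho> ^ nat \<bar>k - m\<bar>"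
      using amplitude_diff_above_scale[OF assms(1,2) 2(1) scale(1) 2(2)] by simp
    also have "\<dots> \<le> 4 * (u' - u) * \<rho> ^ nat \<bar>k - m\<bar>"
      using assms rho_nonneg by (intro mult_right_mono) auto
    finally show ?thesis .
  next
    case 3
    then show ?thesis
      using amplitude_diff_le[OF assms(1,2), of k] assms(2) by simp
  next
    case 4
    then show ?thesis
      using amplitude_diff_below_scale[OF assms(1,2) scale(2)] by simp
  qed
  moreover have "amplitude k u \<le> amplitude k u'"
    using assms(1,2) by (rule amplitude_mono)
  ultimately show ?thesis
    by simp
qed

lemma amplitude_lipschitz_decay:
  assumes "0 \<le> u" "0 \<le> v"
  obtains m where "\<And>k. \<bar>amplitude k u - amplitude k v\<bar> \<le> 4 * \<bar>u - v\<bar> * \<rho> ^ nat \<bar>k - m\<bar>"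
proof -
  have ordered: "\<exists>m. \<forall>k. \<bar>amplitude k b - amplitude k a\<bar> \<le> 4 * (b - a) * \<rho> ^ nat \<bar>k - m\<bar>"
    if ab: "0 \<le> a" "a \<le> b" for a b
  proof (cases "b = 0")
    case True
    with ab have "a = b"
      by simp
    then show ?thesis
      by simp
  next
    case False
    with ab have "0 < b"
      by simp
    then obtain m :: int where scale: "1 \<le> 2 powr m * b" "2 powr m * b < 2"
      by (rule dyadic_scale_exists)
    show ?thesis
      by (intro exI[of _ m] allI amplitude_diff_decay[OF ab scale])
  qed
  have "0 \<le> min u v" "min u v \<le> max u v"
    using assms by auto
  from ordered[OF this] obtain m where m: "\<forall>k. \<bar>amplitude k (max u v) - amplitude k (min u v)\<bar>
      \<le> 4 * (max u v - min u v) * \<rho> ^ nat \<bar>k - m\<bar>"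
    by blast
  show thesis
  proof (rule that)
    fix k
    have "\<bar>amplitude k (max u v) - amplitude k (min u v)\<bar> = \<bar>amplitude k u - amplitude k v\<bar>"
      by (cases "u \<le> v") (simp_all add: max_def min_def abs_minus_commute)
    moreover have "max u v - min u v = \<bar>u - v\<bar>"
      by (cases "u \<le> v") (simp_all add: max_def min_def)
    ultimately show "\<bar>amplitude k u - amplitude k v\<bar> \<le> 4 * \<bar>u - v\<bar> * \<rho> ^ nat \<bar>k - m\<bar>"
      using m by metis
  qed
qed

lemma amplitude_oscillation_decay:
  assumes "0 \<le> u" "0 < h" and scale: "1 \<le> 2 powr m * h" "2 powr m * h < 2"
  shows "amplitude k u * min 2 (2 powr k * h) \<le> 2 * sqrt (u / 2 powr m) * \<rho> ^ nat \<bar>k - m\<bar>"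
proof (cases "m \<le> k")
  case True
  define n where "n = nat (k - m)"
  have "amplitude k u * min 2 (2 powr k * h) \<le> sqrt (u / 2 powr k) * 2"
    using amplitude_le_sqrt[of k u] amplitude_nonneg[OF assms(1), of k] assms by (intro mult_mono) auto
  also have "sqrt (u / 2 powr k) = sqrt ((u / 2 powr m) / 2 ^ n)"
    by (simp add: two_powr_int_split[OF True] n_def)
  also have "\<dots> = sqrt (u / 2 powr m) * \<rho> ^ n"
    by (rule sqrt_divide_two_power)
  finally show ?thesis
    using True by (simp add: n_def mult_ac)
next
  case False
  define e where "e = (2::real) powr k"
  define n where "n = nat (m - k)"
  have "e > 0"
    by (simp add: e_def)
  have split: "2 powr m = e * 2 ^ n"
    using False by (simp add: e_def n_def two_powr_int_split[of k m])
  have "amplitude k u * min 2 (2 powr k * h) \<le> sqrt (u / e) * (e * h)"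
    using amplitude_le_sqrt[of k u] amplitude_nonneg[OF assms(1), of k] assms
    by (intro mult_mono) (auto simp: e_def)
  also have "\<dots> = sqrt (u / 2 powr m) * (2 powr m * h) / sqrt (2 ^ n)"
    using \<open>e > 0\<close> by (simp add: split real_sqrt_mult real_sqrt_divide field_simps)
  also have "\<dots> \<le> sqrt (u / 2 powr m) * 2 / sqrt (2 ^ n)"
    using assms by (intro divide_right_mono mult_left_mono) auto
  finally show ?thesis
    using False by (simp add: rho_power_eq n_def mult.commute)
qed

lemma norm_cis_diff: "norm (cis a - cis b) = norm (cis (a - b) - 1)"
proof -
  have "cis a - cis b = cis b * (cis (a - b) - 1)"
    by (simp add: algebra_simps cis_mult)
  then show ?thesis
    by (simp add: norm_mult)
qed

lemma norm_cis_minus_one_power2: "(norm (cis t - 1))\<^sup>2 = 2 - 2 * cos t"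
proof -
  have "(norm (cis t - 1))\<^sup>2 = (cos t - 1)\<^sup>2 + (sin t)\<^sup>2"
    by (simp add: cmod_power2 cis.code)
  also have "\<dots> = 2 - 2 * cos t"
    using sin_cos_squared_add[of t] by (simp add: power2_eq_square algebra_simps)
  finally show ?thesis .
qed

lemma norm_cis_diff_le: "norm (cis a - cis b) \<le> \<bar>a - b\<bar>"
proof -
  define t where "t = a - b"
  have "(norm (cis t - 1))\<^sup>2 = 4 * (sin (t / 2))\<^sup>2"
    using norm_cis_minus_one_power2[of t] cos_double_sin[of "t / 2"] by simp
  also have "\<dots> \<le> 4 * (t / 2)\<^sup>2"
    using abs_le_square_iff[THEN iffD1, OF abs_sin_x_le_abs_x[of "t / 2"]] by simp
  also have "\<dots> = \<bar>t\<bar>\<^sup>2"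
    by (simp add: power2_eq_square)
  finally have "norm (cis t - 1) \<le> \<bar>t\<bar>"
    by (rule power2_le_imp_le) simp
  then show ?thesis
    by (simp add: norm_cis_diff t_def)
qed

lemma norm_cis_diff_ge:
  assumes "1 \<le> \<bar>a - b\<bar>" "\<bar>a - b\<bar> \<le> 2"
  shows "3 / 4 \<le> norm (cis a - cis b)"
proof -
  have "cos \<bar>a - b\<bar> \<le> cos 1"
    using assms pi_ge_two by (intro cos_monotone_0_pi_le) auto
  then have "cos (a - b) \<le> cos 1"
    by (simp only: cos_abs_real)
  moreover have "2 * (cos (1::real))\<^sup>2 - 1 < 0"
    using cos_two_less_zero cos_double_cos[of "1::real"] by (simp only: mult_1_right)
  then have "(cos (1::real))\<^sup>2 < (23 / 32)\<^sup>2"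
    by (simp add: power_divide)
  then have "cos (1::real) < 23 / 32"
    by (rule power2_less_imp_less) simp
  ultimately have "(3 / 4)\<^sup>2 \<le> (norm (cis (a - b) - 1))\<^sup>2"
    unfolding norm_cis_minus_one_power2 by (simp add: power2_eq_square)
  then show ?thesis
    unfolding norm_cis_diff by (rule power2_le_imp_le) simp
qed

section \<open>Lacunary sums\<close>

definition lacunary_term :: "int \<Rightarrow> real \<Rightarrow> real \<Rightarrow> complex" where
  "lacunary_term k x y = of_real (amplitude k \<bar>y\<bar>) * cis (2 powr k * x)"

definition residue_block :: "8 \<Rightarrow> int set" where
  "residue_block r = {k. of_int k = r}"

definition lacunary_sum :: "8 \<Rightarrow> real \<Rightarrow> real \<Rightarrow> complex" where
  "lacunary_sum r x y = infsum (\<lambda>k. lacunary_term k x y) (residue_block r)"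

lemma norm_lacunary_term: "norm (lacunary_term k x y) = amplitude k \<bar>y\<bar>"
  by (simp add: lacunary_term_def norm_mult amplitude_nonneg)

lemma lacunary_term_summable: "(\<lambda>k. lacunary_term k x y) summable_on B"
proof (cases "y = 0")
  case True
  then show ?thesis
    by (simp add: lacunary_term_def amplitude_def profile_def)
next
  case False
  then obtain m :: int where scale: "1 \<le> 2 powr m * \<bar>y\<bar>" "2 powr m * \<bar>y\<bar> < 2"
    using dyadic_scale_exists[of "\<bar>y\<bar>"] by auto
  have "(\<lambda>k. norm (lacunary_term k x y)) summable_on B"
    using amplitude_decay[OF _ scale] False
    by (intro rho_decay_norm_summable[where C = "2 * \<bar>y\<bar>" and m = m]) (auto simp: norm_lacunary_term)
  then show ?thesis
    by (rule abs_summable_summable)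
qed

lemma lacunary_sum_diff:
  "lacunary_sum r x y - lacunary_sum r x' y' =
    infsum (\<lambda>k. lacunary_term k x y - lacunary_term k x' y') (residue_block r)"
  unfolding lacunary_sum_def by (rule infsum_diff[OF lacunary_term_summable lacunary_term_summable, symmetric])

lemma
  shows lacunary_term_diff_y_norm_summable:
      "(\<lambda>k. norm (lacunary_term k x y - lacunary_term k x y')) summable_on B"
    and lacunary_term_diff_y_infsum_le:
      "infsum (\<lambda>k. norm (lacunary_term k x y - lacunary_term k x y')) B \<le> 24 * \<bar>y - y'\<bar>"
proof -
  obtain m where m: "\<And>k. \<bar>amplitude k \<bar>y\<bar> - amplitude k \<bar>y'\<bar>\<bar> \<le> 4 * \<bar>\<bar>y\<bar> - \<bar>y'\<bar>\<bar> * \<rho> ^ nat \<bar>k - m\<bar>"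
    using amplitude_lipschitz_decay[of "\<bar>y\<bar>" "\<bar>y'\<bar>"] by auto
  have "norm (lacunary_term k x y - lacunary_term k x y') = \<bar>amplitude k \<bar>y\<bar> - amplitude k \<bar>y'\<bar>\<bar>" for k
    by (simp add: lacunary_term_def norm_mult flip: left_diff_distrib of_real_diff)
  then have bound: "norm (lacunary_term k x y - lacunary_term k x y') \<le> 4 * \<bar>\<bar>y\<bar> - \<bar>y'\<bar>\<bar> * \<rho> ^ nat \<bar>k - m\<bar>" for k
    using m by simp
  show "(\<lambda>k. norm (lacunary_term k x y - lacunary_term k x y')) summable_on B"
    using bound by (intro rho_decay_norm_summable[where C = "4 * \<bar>\<bar>y\<bar> - \<bar>y'\<bar>\<bar>" and m = m]) auto
  have "infsum (\<lambda>k. norm (lacunary_term k x y - lacunary_term k x y')) B \<le> 6 * (4 * \<bar>\<bar>y\<bar> - \<bar>y'\<bar>\<bar>)"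
    using bound by (intro rho_decay_infsum_norm_le[where m = m]) auto
  also have "\<dots> \<le> 24 * \<bar>y - y'\<bar>"
    by simp
  finally show "infsum (\<lambda>k. norm (lacunary_term k x y - lacunary_term k x y')) B \<le> 24 * \<bar>y - y'\<bar>" .
qed

lemma norm_lacunary_term_diff_x_eq:
  "norm (lacunary_term k x y - lacunary_term k x' y)
    = amplitude k \<bar>y\<bar> * norm (cis (2 powr k * x) - cis (2 powr k * x'))"
  by (simp add: lacunary_term_def norm_mult amplitude_nonneg flip: right_diff_distrib)

lemma norm_lacunary_term_diff_x:
  "norm (lacunary_term k x y - lacunary_term k x' y) \<le> amplitude k \<bar>y\<bar> * min 2 (2 powr k * \<bar>x - x'\<bar>)"
proof -
  have "norm (cis (2 powr k * x) - cis (2 powr k * x')) \<le> min 2 (2 powr k * \<bar>x - x'\<bar>)"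
    using norm_triangle_ineq4[of "cis (2 powr k * x)" "cis (2 powr k * x')"]
      norm_cis_diff_le[of "2 powr k * x" "2 powr k * x'"]
    by (simp add: abs_mult flip: right_diff_distrib)
  then show ?thesis
    unfolding norm_lacunary_term_diff_x_eq by (simp add: mult_left_mono amplitude_nonneg)
qed

lemma
  shows lacunary_term_diff_x_norm_summable:
      "(\<lambda>k. norm (lacunary_term k x y - lacunary_term k x' y)) summable_on B"
    and lacunary_term_diff_x_infsum_le:
      "infsum (\<lambda>k. norm (lacunary_term k x y - lacunary_term k x' y)) B \<le> 12 * sqrt (\<bar>x - x'\<bar> * \<bar>y\<bar>)"
proof -
  have "(\<lambda>k. norm (lacunary_term k x y - lacunary_term k x' y)) summable_on B \<and>
      infsum (\<lambda>k. norm (lacunary_term k x y - lacunary_term k x' y)) B \<le> 12 * sqrt (\<bar>x - x'\<bar> * \<bar>y\<bar>)"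
  proof (cases "x = x'")
    case True
    then show ?thesis
      by simp
  next
    case False
    then have "0 < \<bar>x - x'\<bar>"
      by simp
    then obtain m :: int where scale: "1 \<le> 2 powr m * \<bar>x - x'\<bar>" "2 powr m * \<bar>x - x'\<bar> < 2"
      by (rule dyadic_scale_exists)
    have bound: "norm (lacunary_term k x y - lacunary_term k x' y)
        \<le> 2 * sqrt (\<bar>y\<bar> / 2 powr m) * \<rho> ^ nat \<bar>k - m\<bar>" for k
      using norm_lacunary_term_diff_x[of k x y x'] amplitude_oscillation_decay[OF _ \<open>0 < \<bar>x - x'\<bar>\<close> scale]
      by (meson abs_ge_zero order_trans)
    have "sqrt (\<bar>y\<bar> / 2 powr m) \<le> sqrt (\<bar>x - x'\<bar> * \<bar>y\<bar>)"
    proof (rule real_sqrt_le_mono)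
      have "1 / 2 powr m \<le> \<bar>x - x'\<bar>"
        using scale by (simp add: field_simps)
      then show "\<bar>y\<bar> / 2 powr m \<le> \<bar>x - x'\<bar> * \<bar>y\<bar>"
        using mult_right_mono[of "1 / 2 powr m" "\<bar>x - x'\<bar>" "\<bar>y\<bar>"] by simp
    qed
    moreover have "infsum (\<lambda>k. norm (lacunary_term k x y - lacunary_term k x' y)) B
        \<le> 6 * (2 * sqrt (\<bar>y\<bar> / 2 powr m))"
      using bound by (intro rho_decay_infsum_norm_le[where m = m]) auto
    moreover have "(\<lambda>k. norm (lacunary_term k x y - lacunary_term k x' y)) summable_on B"
      using bound by (intro rho_decay_norm_summable[where C = "2 * sqrt (\<bar>y\<bar> / 2 powr m)" and m = m]) auto
    ultimately show ?thesis
      by linarith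
  qed
  then show "(\<lambda>k. norm (lacunary_term k x y - lacunary_term k x' y)) summable_on B"
    and "infsum (\<lambda>k. norm (lacunary_term k x y - lacunary_term k x' y)) B \<le> 12 * sqrt (\<bar>x - x'\<bar> * \<bar>y\<bar>)"
    by auto
qed

lemma norm_lacunary_sum_diff_le:
  "norm (lacunary_sum r x y - lacunary_sum r x' y') \<le> 24 * \<bar>y - y'\<bar> + 12 * sqrt (\<bar>x - x'\<bar> * \<bar>y'\<bar>)"
proof -
  have "norm (lacunary_sum r x y - lacunary_sum r x y') \<le> 24 * \<bar>y - y'\<bar>"
    unfolding lacunary_sum_diff
    using norm_infsum_bound[OF lacunary_term_diff_y_norm_summable] lacunary_term_diff_y_infsum_le
    by (rule order_trans)
  moreover have "norm (lacunary_sum r x y' - lacunary_sum r x' y') \<le> 12 * sqrt (\<bar>x - x'\<bar> * \<bar>y'\<bar>)"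
    unfolding lacunary_sum_diff
    using norm_infsum_bound[OF lacunary_term_diff_x_norm_summable] lacunary_term_diff_x_infsum_le
    by (rule order_trans)
  ultimately show ?thesis
    using norm_triangle_ineq[of "lacunary_sum r x y - lacunary_sum r x y'" "lacunary_sum r x y' - lacunary_sum r x' y'"]
    by simp
qed

lemma of_int_eq_iff_8_dvd: "(of_int k :: 8) = of_int k0 \<longleftrightarrow> 8 dvd (k - k0)"
proof -
  have "(of_int k :: 8) = of_int k0 \<longleftrightarrow> (of_int (k - k0) :: 8) = 0"
    by simp
  also have "\<dots> \<longleftrightarrow> int CHAR(8) dvd (k - k0)"
    by (rule of_int_eq_0_iff_char_dvd)
  finally show ?thesis
    by simp
qed

lemma residue_block_punctured: "residue_block (of_int k0) - {k0} = (\<lambda>j. k0 + 8 * j) ` (- {0})"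
proof (intro set_eqI iffI)
  fix k
  assume "k \<in> residue_block (of_int k0) - {k0}"
  then obtain j where "k - k0 = 8 * j" "k \<noteq> k0"
    by (auto simp: residue_block_def of_int_eq_iff_8_dvd elim!: dvdE)
  then show "k \<in> (\<lambda>j. k0 + 8 * j) ` (- {0})"
    by (intro image_eqI[of _ _ j]) auto
qed (auto simp: residue_block_def of_int_eq_iff_8_dvd)

lemma norm_lacunary_term_diff_x_at_scale:
  assumes "\<bar>x - x'\<bar> \<le> \<bar>y\<bar>"
    and scale: "1 \<le> 2 powr k0 * \<bar>x - x'\<bar>" "2 powr k0 * \<bar>x - x'\<bar> < 2"
  shows "3 / 4 * sqrt (\<bar>y\<bar> / 2 powr k0) \<le> norm (lacunary_term k0 x y - lacunary_term k0 x' y)"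
proof -
  have "1 \<le> 2 powr k0 * \<bar>y\<bar>"
    using scale(1) mult_left_mono[OF assms(1), of "2 powr k0"] powr_ge_zero[of 2 k0] by linarith
  then have amplitude: "amplitude k0 \<bar>y\<bar> = sqrt (\<bar>y\<bar> / 2 powr k0)"
    by (simp add: amplitude_eq_sqrt sqrt_mult_divide)
  have "3 / 4 \<le> norm (cis (2 powr k0 * x) - cis (2 powr k0 * x'))"
    using scale by (intro norm_cis_diff_ge) (simp_all add: abs_mult flip: right_diff_distrib)
  then have "sqrt (\<bar>y\<bar> / 2 powr k0) * (3 / 4) \<le> sqrt (\<bar>y\<bar> / 2 powr k0) * norm (cis (2 powr k0 * x) - cis (2 powr k0 * x'))"
    by (rule mult_left_mono) simp
  then show ?thesis
    unfolding norm_lacunary_term_diff_x_eq amplitude by (simp only: mult.commute[of "3 / 4"])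
qed

lemma lacunary_block_tail_le:
  assumes scale: "1 \<le> 2 powr k0 * \<bar>x - x'\<bar>" "2 powr k0 * \<bar>x - x'\<bar> < 2"
  shows "infsum (\<lambda>k. norm (lacunary_term k x y - lacunary_term k x' y)) (residue_block (of_int k0) - {k0})
    \<le> 4 / 15 * sqrt (\<bar>y\<bar> / 2 powr k0)"
proof -
  define D where "D k = norm (lacunary_term k x y - lacunary_term k x' y)" for k
  define A where "A = sqrt (\<bar>y\<bar> / 2 powr k0)"
  have "0 < 2 powr k0 * \<bar>x - x'\<bar>"
    using scale(1) by linarith
  then have "0 < \<bar>x - x'\<bar>"
    by (simp add: zero_less_mult_iff)
  have far: "D (k0 + 8 * j) \<le> (2 * A) * (1 / 16) ^ nat \<bar>j - 0\<bar>" for j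
  proof -
    have "D (k0 + 8 * j) \<le> amplitude (k0 + 8 * j) \<bar>y\<bar> * min 2 (2 powr (k0 + 8 * j) * \<bar>x - x'\<bar>)"
      unfolding D_def by (rule norm_lacunary_term_diff_x)
    also have "\<dots> \<le> 2 * A * \<rho> ^ nat \<bar>(k0 + 8 * j) - k0\<bar>"
      unfolding A_def by (rule amplitude_oscillation_decay[OF _ \<open>0 < \<bar>x - x'\<bar>\<close> scale]) simp
    also have "nat \<bar>(k0 + 8 * j) - k0\<bar> = 8 * nat \<bar>j\<bar>"
      by (simp add: abs_mult nat_mult_distrib)
    finally show ?thesis
      by (simp add: rho_power_mult_8)
  qed
  have "infsum D (residue_block (of_int k0) - {k0}) = infsum (\<lambda>j. D (k0 + 8 * j)) (- {0})"
    unfolding residue_block_punctured by (simp add: infsum_reindex inj_on_def o_def)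
  also have "\<dots> \<le> 2 * A * (2 * (1 / 16) / (1 - 1 / 16))"
    using far A_def unfolding D_def
    by (intro infsum_norm_le_majorant[OF has_sum_cmult_right[OF has_sum_power_abs_diff_int_punctured]]) auto
  finally show ?thesis
    by (simp add: D_def[abs_def] A_def)
qed

lemma lacunary_sum_diff_x_ge:
  assumes "\<bar>x - x'\<bar> \<le> \<bar>y\<bar>"
    and scale: "1 \<le> 2 powr k0 * \<bar>x - x'\<bar>" "2 powr k0 * \<bar>x - x'\<bar> < 2"
  shows "sqrt (\<bar>y\<bar> / 2 powr k0) / 3 \<le> norm (lacunary_sum (of_int k0) x y - lacunary_sum (of_int k0) x' y)"
proof -
  define D where "D k = lacunary_term k x y - lacunary_term k x' y" for k
  define B where "B = residue_block (of_int k0) - {k0}"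
  have "lacunary_sum (of_int k0) x y - lacunary_sum (of_int k0) x' y = infsum D (insert k0 B)"
    unfolding lacunary_sum_diff D_def B_def by (simp add: insert_absorb residue_block_def)
  also have "\<dots> = D k0 + infsum D B"
    unfolding D_def B_def
    by (rule infsum_insert[OF abs_summable_summable[OF lacunary_term_diff_x_norm_summable]]) simp
  finally have split: "lacunary_sum (of_int k0) x y - lacunary_sum (of_int k0) x' y = D k0 + infsum D B" .
  have "norm (infsum D B) \<le> 4 / 15 * sqrt (\<bar>y\<bar> / 2 powr k0)"
    using norm_infsum_bound[of D B] lacunary_block_tail_le[OF scale, of y] unfolding D_def B_def
    by (simp add: lacunary_term_diff_x_norm_summable)
  then have "3 / 4 * sqrt (\<bar>y\<bar> / 2 powr k0) - 4 / 15 * sqrt (\<bar>y\<bar> / 2 powr k0) \<le> norm (D k0 + infsum D B)"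
    using norm_lacunary_term_diff_x_at_scale[OF assms] norm_diff_ineq[of "D k0" "infsum D B"]
    unfolding D_def by simp
  moreover have "0 \<le> sqrt (\<bar>y\<bar> / 2 powr k0)"
    by simp
  ultimately show ?thesis
    unfolding split by linarith
qed

lemma lacunary_sums_separate:
  assumes "0 < \<bar>x - x'\<bar>" "\<bar>x - x'\<bar> \<le> \<bar>y\<bar>"
  obtains r where "sqrt (\<bar>x - x'\<bar> * \<bar>y\<bar>) \<le> 6 * norm (lacunary_sum r x y - lacunary_sum r x' y)"
proof -
  obtain k0 :: int where scale: "1 \<le> 2 powr k0 * \<bar>x - x'\<bar>" "2 powr k0 * \<bar>x - x'\<bar> < 2"
    using assms(1) by (rule dyadic_scale_exists)
  have "\<bar>x - x'\<bar> \<le> 4 / 2 powr k0"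
    using scale(2) by (simp add: field_simps)
  then have "\<bar>x - x'\<bar> * \<bar>y\<bar> \<le> 2\<^sup>2 * (\<bar>y\<bar> / 2 powr k0)"
    using mult_right_mono[of "\<bar>x - x'\<bar>" "4 / 2 powr k0" "\<bar>y\<bar>"] by simp
  then have "sqrt (\<bar>x - x'\<bar> * \<bar>y\<bar>) \<le> sqrt (2\<^sup>2 * (\<bar>y\<bar> / 2 powr k0))"
    by (rule real_sqrt_le_mono)
  also have "\<dots> = 2 * sqrt (\<bar>y\<bar> / 2 powr k0)"
    by (simp only: real_sqrt_mult real_sqrt_abs2) simp
  also have "\<dots> \<le> 6 * norm (lacunary_sum (of_int k0) x y - lacunary_sum (of_int k0) x' y)"
    using lacunary_sum_diff_x_ge[OF assms(2) scale] by simp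
  finally show thesis
    by (rule that)
qed

section \<open>The embedding\<close>

definition embedding :: "real \<Rightarrow> real \<Rightarrow> (complex^8) \<times> real \<times> real" where
  "embedding x y = ((\<chi> r. lacunary_sum r x y), x, y)"

lemma
  fixes V :: "'a::real_normed_vector" and a b :: real
  shows norm_triple_ge: "norm V \<le> norm (V, a, b)" "\<bar>a\<bar> \<le> norm (V, a, b)" "\<bar>b\<bar> \<le> norm (V, a, b)"
    and norm_triple_le: "norm (V, a, b) \<le> norm V + \<bar>a\<bar> + \<bar>b\<bar>"
proof -
  show "norm V \<le> norm (V, a, b)"
    by (rule norm_fst_le)
  show "\<bar>a\<bar> \<le> norm (V, a, b)"
    using norm_fst_le[of a b] norm_snd_le[of "(a, b)" V] by simp
  show "\<bar>b\<bar> \<le> norm (V, a, b)"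
    using norm_snd_le[of b a] norm_snd_le[of "(a, b)" V] by simp
  show "norm (V, a, b) \<le> norm V + \<bar>a\<bar> + \<bar>b\<bar>"
    using norm_Pair_le[of V "(a, b)"] norm_Pair_le[of a b] by simp
qed

lemma norm_vec_le_sum: "norm v \<le> (\<Sum>i\<in>UNIV. norm (v $ i))"
  unfolding norm_vec_def by (rule L2_set_le_sum) simp

lemma embedding_diff:
  "embedding x y - embedding x' y' = ((\<chi> r. lacunary_sum r x y - lacunary_sum r x' y'), x - x', y - y')"
  by (simp add: embedding_def vec_eq_iff)

lemma norm_embedding_diff_le:
  fixes x y x' y' :: real
  shows "norm (embedding x y - embedding x' y')
    \<le> 289 * (\<bar>x - x'\<bar> + \<bar>y - y'\<bar> + sqrt (\<bar>x - x'\<bar> * \<bar>y + y'\<bar> / 2))"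
proof -
  define S where "S = sqrt (\<bar>x - x'\<bar> * \<bar>y + y'\<bar> / 2)"
  have "\<bar>y'\<bar> \<le> \<bar>y + y'\<bar> / 2 + \<bar>y - y'\<bar> / 2"
    using abs_triangle_ineq4[of "y + y'" "y - y'"] by (simp add: abs_mult)
  then have "sqrt (\<bar>x - x'\<bar> * \<bar>y'\<bar>) \<le> sqrt (\<bar>x - x'\<bar> * (\<bar>y + y'\<bar> / 2)) + \<bar>x - x'\<bar> + \<bar>y - y'\<bar>"
    by (intro sqrt_mult_le_shift) auto
  then have "sqrt (\<bar>x - x'\<bar> * \<bar>y'\<bar>) \<le> S + \<bar>x - x'\<bar> + \<bar>y - y'\<bar>"
    by (simp add: S_def)
  moreover have "0 \<le> S"
    by (simp add: S_def)
  ultimately have "norm (lacunary_sum r x y - lacunary_sum r x' y') \<le> 36 * \<bar>x - x'\<bar> + 36 * \<bar>y - y'\<bar> + 36 * S" for r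
    using norm_lacunary_sum_diff_le[of r x y x' y'] abs_ge_zero[of "x - x'"] by linarith
  then have "(\<Sum>r\<in>UNIV. norm (lacunary_sum r x y - lacunary_sum r x' y'))
      \<le> of_nat CARD(8) * (36 * \<bar>x - x'\<bar> + 36 * \<bar>y - y'\<bar> + 36 * S)"
    by (intro sum_bounded_above)
  moreover have "norm (embedding x y - embedding x' y')
      \<le> (\<Sum>r\<in>UNIV. norm (lacunary_sum r x y - lacunary_sum r x' y')) + \<bar>x - x'\<bar> + \<bar>y - y'\<bar>"
    unfolding embedding_diff
    using norm_triple_le[of "\<chi> r. lacunary_sum r x y - lacunary_sum r x' y'" "x - x'" "y - y'"]
      norm_vec_le_sum[of "\<chi> r. lacunary_sum r x y - lacunary_sum r x' y'"]
    by simp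
  ultimately show ?thesis
    using \<open>0 \<le> S\<close> unfolding S_def[symmetric] by simp
qed

lemma
  fixes x y x' y' :: real
  shows abs_diff_x_le_norm_embedding_diff: "\<bar>x - x'\<bar> \<le> norm (embedding x y - embedding x' y')"
    and abs_diff_y_le_norm_embedding_diff: "\<bar>y - y'\<bar> \<le> norm (embedding x y - embedding x' y')"
    and norm_lacunary_sum_diff_le_norm_embedding_diff:
      "norm (lacunary_sum r x y - lacunary_sum r x' y') \<le> norm (embedding x y - embedding x' y')"
proof -
  show "\<bar>x - x'\<bar> \<le> norm (embedding x y - embedding x' y')"
    and "\<bar>y - y'\<bar> \<le> norm (embedding x y - embedding x' y')"
    unfolding embedding_diff by (rule norm_triple_ge)+
  show "norm (lacunary_sum r x y - lacunary_sum r x' y') \<le> norm (embedding x y - embedding x' y')"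
    using Finite_Cartesian_Product.norm_nth_le[of "\<chi> r. lacunary_sum r x y - lacunary_sum r x' y'" r]
      norm_triple_ge(1)[of "\<chi> r. lacunary_sum r x y - lacunary_sum r x' y'" "x - x'" "y - y'"]
    unfolding embedding_diff by simp
qed

lemma sqrt_mult_abs_le_norm_embedding_diff:
  fixes x y x' y' :: real
  shows "sqrt (\<bar>x - x'\<bar> * \<bar>y\<bar>) \<le> 150 * norm (embedding x y - embedding x' y')"
proof -
  define N where "N = norm (embedding x y - embedding x' y')"
  have "0 \<le> N"
    by (simp add: N_def)
  consider "\<bar>y\<bar> < \<bar>x - x'\<bar>" | "0 < \<bar>x - x'\<bar>" "\<bar>x - x'\<bar> \<le> \<bar>y\<bar>" | "x = x'"
    by fastforce
  then show ?thesis
  proof cases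
    case 1
    then have "\<bar>x - x'\<bar> * \<bar>y\<bar> \<le> \<bar>x - x'\<bar>\<^sup>2"
      using mult_left_mono[of "\<bar>y\<bar>" "\<bar>x - x'\<bar>" "\<bar>x - x'\<bar>"] by (simp add: power2_eq_square)
    then have "sqrt (\<bar>x - x'\<bar> * \<bar>y\<bar>) \<le> \<bar>x - x'\<bar>"
      by (intro real_le_lsqrt) simp_all
    then show ?thesis
      using abs_diff_x_le_norm_embedding_diff[of x x' y y'] \<open>0 \<le> N\<close> unfolding N_def by linarith
  next
    case 2
    then obtain r where "sqrt (\<bar>x - x'\<bar> * \<bar>y\<bar>) \<le> 6 * norm (lacunary_sum r x y - lacunary_sum r x' y)"
      by (rule lacunary_sums_separate)
    moreover have "norm (lacunary_sum r x' y' - lacunary_sum r x' y) \<le> 24 * \<bar>y - y'\<bar>"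
      using norm_lacunary_sum_diff_le[of r x' y' x' y] by (simp add: abs_minus_commute)
    ultimately show ?thesis
      using norm_lacunary_sum_diff_le_norm_embedding_diff[of r x y x' y']
        abs_diff_y_le_norm_embedding_diff[of y y' x x']
        norm_triangle_ineq[of "lacunary_sum r x y - lacunary_sum r x' y'" "lacunary_sum r x' y' - lacunary_sum r x' y"]
      by simp
  next
    case 3
    then show ?thesis
      by simp
  qed
qed

lemma norm_embedding_diff_ge:
  fixes x y x' y' :: real
  shows "\<bar>x - x'\<bar> + \<bar>y - y'\<bar> + sqrt (\<bar>x - x'\<bar> * \<bar>y + y'\<bar> / 2)
    \<le> 154 * norm (embedding x y - embedding x' y')"
proof -
  have "sqrt (\<bar>x - x'\<bar> * (\<bar>y + y'\<bar> / 2)) \<le> sqrt (\<bar>x - x'\<bar> * \<bar>y\<bar>) + \<bar>x - x'\<bar> + \<bar>y - y'\<bar>"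
    using abs_triangle_ineq4[of "2 * y" "y - y'"] by (intro sqrt_mult_le_shift) auto
  then show ?thesis
    using sqrt_mult_abs_le_norm_embedding_diff[of x x' y y']
      abs_diff_x_le_norm_embedding_diff[of x x' y y'] abs_diff_y_le_norm_embedding_diff[of y y' x x']
    by simp
qed

lemma heis_dist_heis_plane:
  "heis_dist (x, y, x * y / 2) (x', y', x' * y' / 2)
    = \<bar>x - x'\<bar> + \<bar>y - y'\<bar> + sqrt (\<bar>x - x'\<bar> * \<bar>y + y'\<bar> / 2)"
proof -
  have "x * y / 2 - x' * y' / 2 + 1 / 2 * (x * y' - x' * y) = (x - x') * (y + y') / 2"
    by (simp add: algebra_simps)
  then show ?thesis
    unfolding heis_dist_def prod.case by (simp only:) (simp add: abs_mult)
qed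

lemma bilip_embeds_into_higher_dim:
  fixes f :: "'a \<Rightarrow> 'c::euclidean_space"
  assumes "DIM('c) \<le> DIM('b::euclidean_space)" "1 \<le> L"
    and "\<And>a b. a \<in> A \<Longrightarrow> b \<in> A \<Longrightarrow> d a b \<le> L * norm (f a - f b) \<and> norm (f a - f b) \<le> L * d a b"
  shows "bilip_embeds d A TYPE('b)"
proof -
  obtain g :: "'c \<Rightarrow> 'b" where g: "linear g" "\<And>v. norm (g v) = norm v"
    using isometry_subset_subspace[OF subspace_UNIV subspace_UNIV, where 'a = 'c and 'b = 'b] assms(1)
    by (metis UNIV_I dim_UNIV)
  have "norm (g (f a) - g (f b)) = norm (f a - f b)" for a b
    by (simp flip: linear_diff[OF g(1)] add: g(2))
  then show ?thesis
    unfolding bilip_embeds_def using assms(2,3)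
    by (intro exI[of _ L] exI[of _ "\<lambda>a. g (f a)"]) (auto simp: pos_divide_le_eq mult.commute)
qed

theorem proposition5p6:
  shows "bilip_embeds heis_dist heis_plane TYPE(real ^ 19)"
proof -
  define F where "F p = (case p of (x, y, z) \<Rightarrow> embedding x y)" for p :: "real \<times> real \<times> real"
  have "heis_dist p q \<le> 289 * norm (F p - F q) \<and> norm (F p - F q) \<le> 289 * heis_dist p q"
    if plane: "p \<in> heis_plane" "q \<in> heis_plane" for p q
  proof -
    obtain x y x' y' where "p = (x, y, 1 / 2 * x * y)" "q = (x', y', 1 / 2 * x' * y')"
      using plane by (auto simp: heis_plane_def)
    then show ?thesis
      using norm_embedding_diff_le[of x y x' y'] norm_embedding_diff_ge[of x x' y y']
      by (simp add: F_def heis_dist_heis_plane)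
  qed
  moreover have "DIM((complex^8) \<times> real \<times> real) \<le> DIM(real ^ 19)"
    by simp
  ultimately show ?thesis
    by (intro bilip_embeds_into_higher_dim[where f = F and L = 289]) auto
qed

end
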